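(* Let $l,n$ be positive integers, $\mathbf{x}_1,\dots,\mathbf{x}_l\in\mathbb{R}^n$, $y_1,\dots,y_l\in\mathbb{R}$, $a_1,\dots,a_l,b_1,\dots,b_l\in\mathbb{R}$, and let $\alpha<\beta$ be real numbers. Let $\mathbf Z\in\mathbb{R}^{l\times n}$ have $i$-th row $a_i\mathbf x_i^T$ and $\bar{\mathbf y}=(b_1y_1,\dots,b_ly_l)^T$. For $C>0$ let $\theta^*(C)$ denote an optimal solution of $$\min_{\theta\in[\alpha,\beta]^l}\ \tfrac{C}{2}\|\mathbf Z^T\theta\|^2-\langle\bar{\mathbf y},\theta\rangle.$$ Then for any $C>C_0>0$ and any such optimal solutions $\theta^*(C)$, $\theta^*(C_0)$, $$\Big\|\mathbf Z^T\theta^*(C)-\tfrac{C_0+C}{2C}\mathbf Z^T\theta^*(C_0)\Big\|\le\tfrac{C-C_0}{2C}\|\mathbf Z^T\theta^*(C_0)\|.$$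
   Context: In the paper this is the dual of the problem $\min_{\mathbf w}\frac12\|\mathbf w\|^2+C\sum_{i}\varphi(\mathbf w^T(a_i\mathbf x_i)+b_iy_i)$, where $\varphi:\mathbb{R}\to[0,\infty)$ is nonconstant, continuous and sublinear, and $[\alpha,\beta]$ is the interval on which the conjugate $\varphi^*$ vanishes ($\varphi^*=+\infty$ outside it). $\|\cdot\|$ is the Euclidean norm. *)

theory Defs
  imports "HOL-Analysis.Analysis"
begin

definition Zmat :: "('l::finite \<Rightarrow> real) \<Rightarrow> ('l \<Rightarrow> real ^ 'n::finite) \<Rightarrow> real ^ 'n ^ 'l" where
  "Zmat a x = (\<chi> i. a i *\<^sub>R x i)"

definition ybar :: "('l::finite \<Rightarrow> real) \<Rightarrow> ('l \<Rightarrow> real) \<Rightarrow> real ^ 'l" where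
  "ybar b y = (\<chi> i. b i * y i)"

definition dual_obj :: "real \<Rightarrow> real ^ 'n::finite ^ 'l::finite \<Rightarrow> real ^ 'l \<Rightarrow> real ^ 'l \<Rightarrow> real" where
  "dual_obj C Z yb \<theta> = C / 2 * (norm (transpose Z *v \<theta>))\<^sup>2 - inner yb \<theta>"

definition box' :: "real \<Rightarrow> real \<Rightarrow> (real ^ 'l::finite) set" where
  "box' \<alpha> \<beta> = {\<theta>. \<forall>i. \<alpha> \<le> \<theta> $ i \<and> \<theta> $ i \<le> \<beta>}"

definition is_dual_opt :: "real \<Rightarrow> real ^ 'n::finite ^ 'l::finite \<Rightarrow> real ^ 'l \<Rightarrow> real \<Rightarrow> real \<Rightarrow> real ^ 'l \<Rightarrow> bool" where
  "is_dual_opt C Z yb \<alpha> \<beta> \<theta> \<longleftrightarrow> \<theta> \<in> box' \<alpha> \<beta> \<and>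
     (\<forall>\<eta>\<in>box' \<alpha> \<beta>. dual_obj C Z yb \<theta> \<le> dual_obj C Z yb \<eta>)"

end

theory Submission
  imports Defs
begin

text \<open>Writing u and v for the images Z^T theta under the optimal solutions for C and C0,
  first-order optimality of each solution, tested against the other one, gives
  C <u, v - u> >= <ybar, theta_C0 - theta_C> and C0 <v, u - v> >= <ybar, theta_C - theta_C0>.
  Adding them cancels the linear term and leaves
  C |u|^2 - (C + C0) <u, v> + C0 |v|^2 <= 0, which after division by C and completing
  the square is exactly |u - c v|^2 <= r^2 |v|^2 with c = (C0 + C)/(2C), r = (C - C0)/(2C).\<close>

lemma nonneg_if_nonneg_perturbations:
  fixes g K :: real
  assumes "\<And>t. 0 < t \<Longrightarrow> t \<le> 1 \<Longrightarrow> 0 \<le> g + t * K"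
  shows "0 \<le> g"
proof (rule ccontr)
  assume "\<not> 0 \<le> g"
  define t where "t = min 1 (- g / (2 * \<bar>K\<bar> + 1))"
  have "0 < - g / (2 * \<bar>K\<bar> + 1)"
    using \<open>\<not> 0 \<le> g\<close> by (intro divide_pos_pos) auto
  then have t: "0 < t" "t \<le> 1" "t * (2 * \<bar>K\<bar> + 1) \<le> - g"
    by (auto simp: t_def pos_le_divide_eq[symmetric] add_pos_nonneg)
  have "t * K \<le> t * \<bar>K\<bar>" "0 \<le> t * \<bar>K\<bar>"
    using t by (simp_all add: mult_left_mono)
  moreover have "t * (2 * \<bar>K\<bar> + 1) = 2 * (t * \<bar>K\<bar>) + t"
    by (simp add: algebra_simps)
  ultimately show False
    using t assms[OF t(1,2)] by linarith
qed

lemma norm_add_scaleR_power2: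
  fixes p q :: "'a::real_inner"
  shows "(norm (p + t *\<^sub>R q))\<^sup>2 = (norm p)\<^sup>2 + 2 * t * inner p q + t\<^sup>2 * (norm q)\<^sup>2"
  unfolding power2_norm_eq_inner
  by (simp add: inner_add_left inner_add_right inner_commute[of q p] power2_eq_square
      algebra_simps)

lemma quadratic_min_variational_ineq:
  fixes L :: "'a::real_inner \<Rightarrow> 'b::real_inner"
  assumes "linear L" "convex S" "\<theta> \<in> S" "\<eta> \<in> S"
    and min: "\<And>\<xi>. \<xi> \<in> S \<Longrightarrow>
      C / 2 * (norm (L \<theta>))\<^sup>2 - inner yb \<theta> \<le> C / 2 * (norm (L \<xi>))\<^sup>2 - inner yb \<xi>"
  shows "0 \<le> C * inner (L \<theta>) (L \<eta> - L \<theta>) - inner yb (\<eta> - \<theta>)"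
proof (rule nonneg_if_nonneg_perturbations)
  fix t :: real
  assume t: "0 < t" "t \<le> 1"
  define d where "d = \<eta> - \<theta>"
  have "\<theta> + t *\<^sub>R d = (1 - t) *\<^sub>R \<theta> + t *\<^sub>R \<eta>"
    by (simp add: d_def algebra_simps)
  then have "\<theta> + t *\<^sub>R d \<in> S"
    using assms(2-4) t by (simp add: convex_def)
  from min[OF this] have "0 \<le> t * (C * inner (L \<theta>) (L d) - inner yb d
                                   + t * (C / 2 * (norm (L d))\<^sup>2))"
    unfolding linear_add[OF \<open>linear L\<close>] linear_scale[OF \<open>linear L\<close>]
      norm_add_scaleR_power2
    by (simp add: algebra_simps power2_eq_square)
  then show "0 \<le> C * inner (L \<theta>) (L \<eta> - L \<theta>) - inner yb (\<eta> - \<theta>)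
                 + t * (C / 2 * (norm (L d))\<^sup>2)"
    using t \<open>linear L\<close> by (simp add: d_def linear_diff zero_le_mult_iff)
qed

lemma convex_box': "convex (box' \<alpha> \<beta> :: (real ^ 'l::finite) set)"
proof -
  have "box' \<alpha> \<beta> = (cbox (vec \<alpha>) (vec \<beta>) :: (real ^ 'l) set)"
    by (auto simp: box'_def mem_box_cart)
  then show ?thesis by simp
qed

lemma is_dual_opt_variational_ineq:
  assumes "is_dual_opt C Z yb \<alpha> \<beta> \<theta>" "\<eta> \<in> box' \<alpha> \<beta>"
  shows "0 \<le> C * inner (transpose Z *v \<theta>) (transpose Z *v \<eta> - transpose Z *v \<theta>)
              - inner yb (\<eta> - \<theta>)"
  using assms
  by (intro quadratic_min_variational_ineq[where S = "box' \<alpha> \<beta>"] convex_box'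
      matrix_vector_mul_linear)
     (auto simp: is_dual_opt_def dual_obj_def)

lemma norm_diff_scaleR_le_if_monotone_pair:
  fixes u v :: "'a::real_inner"
  assumes "0 < C" "C\<^sub>0 \<le> C"
    and mono: "0 \<le> C * inner u (v - u) + C\<^sub>0 * inner v (u - v)"
  shows "norm (u - ((C\<^sub>0 + C) / (2 * C)) *\<^sub>R v) \<le> (C - C\<^sub>0) / (2 * C) * norm v"
proof (rule power2_le_imp_le)
  define c where "c = (C\<^sub>0 + C) / (2 * C)"
  define r where "r = (C - C\<^sub>0) / (2 * C)"
  have "C * ((norm (u - c *\<^sub>R v))\<^sup>2 - (r * norm v)\<^sup>2)
        = - (C * inner u (v - u) + C\<^sub>0 * inner v (u - v))"
    using \<open>0 < C\<close> unfolding power_mult_distrib power2_norm_eq_inner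
    by (simp add: c_def r_def inner_diff_left inner_diff_right inner_commute[of v u]
        power2_eq_square field_simps)
  with mono have "C * ((norm (u - c *\<^sub>R v))\<^sup>2 - (r * norm v)\<^sup>2) \<le> 0"
    by linarith
  with \<open>0 < C\<close> have "(norm (u - c *\<^sub>R v))\<^sup>2 \<le> (r * norm v)\<^sup>2"
    by (simp add: mult_le_0_iff)
  then show "(norm (u - ((C\<^sub>0 + C) / (2 * C)) *\<^sub>R v))\<^sup>2 \<le> ((C - C\<^sub>0) / (2 * C) * norm v)\<^sup>2"
    by (simp add: c_def r_def)
  show "0 \<le> (C - C\<^sub>0) / (2 * C) * norm v"
    using assms(1,2) by simp
qed

theorem theorem2:
  fixes x :: "'l::finite \<Rightarrow> real ^ 'n::finite"
    and y a b :: "'l \<Rightarrow> real"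
    and \<alpha> \<beta> C C\<^sub>0 :: real
    and \<theta>C \<theta>C0 :: "real ^ 'l"
  assumes "\<alpha> < \<beta>"
    and "0 < C\<^sub>0" and "C\<^sub>0 < C"
    and "is_dual_opt C (Zmat a x) (ybar b y) \<alpha> \<beta> \<theta>C"
    and "is_dual_opt C\<^sub>0 (Zmat a x) (ybar b y) \<alpha> \<beta> \<theta>C0"
  shows "norm (transpose (Zmat a x) *v \<theta>C
               - ((C\<^sub>0 + C) / (2 * C)) *\<^sub>R (transpose (Zmat a x) *v \<theta>C0))
         \<le> (C - C\<^sub>0) / (2 * C) * norm (transpose (Zmat a x) *v \<theta>C0)"
proof (rule norm_diff_scaleR_le_if_monotone_pair)
  let ?u = "transpose (Zmat a x) *v \<theta>C" and ?v = "transpose (Zmat a x) *v \<theta>C0"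
  have box: "\<theta>C \<in> box' \<alpha> \<beta>" "\<theta>C0 \<in> box' \<alpha> \<beta>"
    using assms(4,5) by (auto simp: is_dual_opt_def)
  have "0 \<le> C * inner ?u (?v - ?u) - inner (ybar b y) (\<theta>C0 - \<theta>C)"
    by (rule is_dual_opt_variational_ineq[OF assms(4) box(2)])
  moreover have "0 \<le> C\<^sub>0 * inner ?v (?u - ?v) - inner (ybar b y) (\<theta>C - \<theta>C0)"
    by (rule is_dual_opt_variational_ineq[OF assms(5) box(1)])
  moreover have "inner (ybar b y) (\<theta>C - \<theta>C0) = - inner (ybar b y) (\<theta>C0 - \<theta>C)"
    by (simp add: inner_diff_right)
  ultimately show "0 \<le> C * inner ?u (?v - ?u) + C\<^sub>0 * inner ?v (?u - ?v)"
    by linarith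
qed (use assms(2,3) in auto)

end
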